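(* Let $P=\{x\in\mathbb R^n : Ax=b,\ Bx\le d\}$ with $A\in\mathbb R^{m_A\times n}$, $B\in\mathbb R^{m_B\times n}$ be a pointed polyhedron. Then the cone $$C_{A,B}=\{(x,y^+,y^-)\in\mathbb R^{n+2m_B} : Ax=0,\ Bx=y^+-y^-,\ y^+,y^-\ge 0\}$$ is pointed and is generated by a set of extreme rays $S\cup T'$, where: (1) $S:=\{(g,y^+,y^-) : g\in\mathcal C(A,B),\ y^+_i=\max\{(Bg)_i,0\},\ y^-_i=\max\{-(Bg)_i,0\}\ \text{for } i\le m_B\}$ (these give the circuits of $P$); (2) $T'$ is a subset of $T:=\{(0,y^+,y^-) : \text{for some } i\le m_B,\ y^+_i=y^-_i=1 \text{ and } y^+_j=y^-_j=0 \text{ for } j\ne i\}$ with $|T'|\le m_B$. That is, the extreme rays of $C_{A,B}$ are exactly the rays spanned by the elements of $S\cup T'$.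
   Context: $P$ is pointed means $\operatorname{rank}\binom{A}{B}=n$. The set of circuits $\mathcal C(A,B)$ of $P$ consists of all $g\in\ker(A)\setminus\{0\}$ normalized to coprime integer components for which $Bg$ is support-minimal over $\{Bx : x\in\ker(A)\setminus\{0\}\}$, i.e. no $x\in\ker(A)\setminus\{0\}$ satisfies $\operatorname{supp}(Bx)\subsetneq\operatorname{supp}(Bg)$. *)

theory Defs
  imports "HOL-Analysis.Analysis"
begin

definition stack_mat :: "real^'n^'ma \<Rightarrow> real^'n^'mb \<Rightarrow> real^'n^('ma + 'mb)" where
  "stack_mat A B = (\<chi> k. case k of Inl i \<Rightarrow> A $ i | Inr j \<Rightarrow> B $ j)"

text \<open>The polyhedron {x. Ax = b, Bx <= d} is pointed: rank of (A;B) equals n.\<close>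
definition pointed_poly :: "real^'n^'ma \<Rightarrow> real^'n^'mb \<Rightarrow> bool" where
  "pointed_poly A B \<longleftrightarrow> rank (stack_mat A B) = CARD('n)"

definition vsupp :: "real^'m \<Rightarrow> 'm set" where
  "vsupp v = {i. v $ i \<noteq> 0}"

definition circuits :: "real^'n^'ma \<Rightarrow> real^'n^'mb \<Rightarrow> (real^'n) set" where
  "circuits A B = {g. A *v g = 0 \<and> g \<noteq> 0
      \<and> (\<forall>i. g $ i \<in> \<int>)
      \<and> Gcd ((\<lambda>i. \<lfloor>g $ i\<rfloor>) ` UNIV) = (1::int)
      \<and> \<not> (\<exists>x. A *v x = 0 \<and> x \<noteq> 0 \<and> vsupp (B *v x) \<subset> vsupp (B *v g))}"

text \<open>The cone C_{A,B} in R^{n + 2 m_B}, points written as triples (x, y+, y-).\<close>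
definition cone_AB :: "real^'n^'ma \<Rightarrow> real^'n^'mb \<Rightarrow> ((real^'n) \<times> (real^'mb) \<times> (real^'mb)) set" where
  "cone_AB A B = {(x, yp, ym). A *v x = 0 \<and> B *v x = yp - ym
      \<and> (\<forall>i. 0 \<le> yp $ i) \<and> (\<forall>i. 0 \<le> ym $ i)}"

definition pointed_cone :: "'a::real_vector set \<Rightarrow> bool" where
  "pointed_cone C \<longleftrightarrow> (\<forall>z. z \<in> C \<and> - z \<in> C \<longrightarrow> z = 0)"

definition ray :: "'a::real_vector \<Rightarrow> 'a set" where
  "ray r = {t *\<^sub>R r | t. 0 \<le> t}"

definition extreme_ray_of :: "'a::real_vector set \<Rightarrow> 'a set \<Rightarrow> bool" where
  "extreme_ray_of R C \<longleftrightarrow> (\<exists>r. r \<noteq> 0 \<and> R = ray r \<and> R face_of C)"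

definition S_set :: "real^'n^'ma \<Rightarrow> real^'n^'mb \<Rightarrow> ((real^'n) \<times> (real^'mb) \<times> (real^'mb)) set" where
  "S_set A B = {(g, \<chi> i. max ((B *v g) $ i) 0, \<chi> i. max (- (B *v g) $ i) 0) | g. g \<in> circuits A B}"

definition T_set :: "((real^'n) \<times> (real^'mb) \<times> (real^'mb)) set" where
  "T_set = {(0, axis i 1, axis i 1) | i. True}"

end

theory Submission
  imports Defs
begin

text \<open>
  A point \<open>(x, y\<^sup>+, y\<^sup>-)\<close> of the cone is the lift \<open>(x, (Bx)\<^sup>+, (Bx)\<^sup>-)\<close> of a kernel vector
  \<open>x\<close> of \<open>A\<close> plus a nonnegative combination of the points \<open>(0, e\<^sub>i, e\<^sub>i)\<close>. By conformal
  decomposition the lift of \<open>x\<close> is a nonnegative combination of lifts of support-minimal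
  kernel vectors whose \<open>B\<close>-images conform in sign to \<open>Bx\<close>, and for rational \<open>A\<close>, \<open>B\<close> every
  support-minimal vector is a positive multiple of a circuit. The point \<open>(0, e\<^sub>i, e\<^sub>i)\<close> is
  redundant exactly when some nonzero kernel vector \<open>x\<close> has \<open>Bx\<close> supported on row \<open>i\<close>, for then
  it is a positive multiple of the sum of the lifts of \<open>x\<close> and \<open>-x\<close>. Pointedness of \<open>P\<close> says
  that \<open>Ax = 0\<close> and \<open>Bx = 0\<close> force \<open>x = 0\<close>; this makes the cone pointed, so its extreme rays are
  exactly the rays of its indecomposable elements. A summand of the lift of a support-minimal
  \<open>g\<close> has \<open>B\<close>-support inside that of \<open>Bg\<close> and is therefore a multiple of it, while the lift of a
  kernel vector that is not support-minimal splits into two conformal, non-proportional lifts.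
\<close>

section \<open>Rational vectors\<close>

lemma rational_kernel_vector:
  fixes M :: "real^'n^'k"
  assumes rat: "\<forall>i j. M $ i $ j \<in> \<rat>" and x: "M *v x = 0" "x \<noteq> 0"
  obtains r where "r \<noteq> 0" "\<forall>j. r $ j \<in> \<rat>" "M *v r = 0"
proof -
  have "\<forall>i j. \<exists>q. M $ i $ j = of_rat q" using rat by (metis Rats_cases)
  then obtain f where f: "\<And>i j. M $ i $ j = of_rat (f i j)" by metis
  define Mq :: "rat^'n^'k" where "Mq = (\<chi> i j. f i j)"
  have of_rat_mult_vector: "M *v (\<chi> j. of_rat (v $ j)) = (\<chi> i. of_rat ((Mq *v v) $ i))" for v
    by (simp add: vec_eq_iff matrix_vector_mult_def Mq_def f of_rat_sum of_rat_mult)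
  \<comment> \<open>A rational left inverse of Mq would also be a real left inverse of M.\<close>
  have "\<not> (\<forall>v. Mq *v v = 0 \<longrightarrow> v = 0)"
  proof
    assume "\<forall>v. Mq *v v = 0 \<longrightarrow> v = 0"
    then obtain L :: "rat^'k^'n" where L: "L ** Mq = mat 1"
      by (auto simp: matrix_left_invertible_ker[symmetric])
    define Lr where "Lr = (\<chi> i j. (of_rat (L $ i $ j) :: real))"
    have "(Lr ** M) $ i $ j = of_rat ((L ** Mq) $ i $ j)" for i j
      by (simp add: Lr_def matrix_matrix_mult_def Mq_def f of_rat_sum of_rat_mult)
    then have "Lr ** M = mat 1" using L by (simp add: vec_eq_iff mat_def)
    then have "x = 0" using x(1) matrix_left_invertible_ker by blast
    with x(2) show False ..
  qed
  then obtain v where v: "Mq *v v = 0" "v \<noteq> 0" by blast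
  show thesis
  proof
    show "(\<chi> j. of_rat (v $ j)) \<noteq> (0 :: real^'n)" using v(2) by (simp add: vec_eq_iff)
    show "M *v (\<chi> j. of_rat (v $ j)) = 0" using v(1) by (simp add: of_rat_mult_vector vec_eq_iff)
  qed simp
qed

lemma rational_vector_common_denominator:
  fixes r :: "real^'n"
  assumes "\<forall>j. r $ j \<in> \<rat>"
  obtains D :: int where "D > 0" "\<forall>j. of_int D * r $ j \<in> \<int>"
proof -
  have "\<forall>j. \<exists>a b. b > 0 \<and> r $ j = of_int a / of_int b"
    using assms Rats_cases' by metis
  then obtain a b where ab: "\<And>j. b j > (0::int)" "\<And>j. r $ j = of_int (a j) / of_int (b j)"
    by metis
  define D where "D = (\<Prod>k\<in>UNIV. b k)"
  have "of_int D * r $ j \<in> \<int>" for j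
  proof -
    have "D = b j * (\<Prod>k\<in>UNIV - {j}. b k)"
      unfolding D_def by (simp add: prod.remove)
    then have "of_int D * r $ j = of_int (a j * (\<Prod>k\<in>UNIV - {j}. b k))"
      using ab[of j] by (simp add: field_simps)
    then show ?thesis by (metis Ints_of_int)
  qed
  moreover have "D > 0" unfolding D_def using ab(1) by (intro prod_pos) auto
  ultimately show thesis using that by blast
qed

lemma rational_vector_primitive_multiple:
  fixes r :: "real^'n"
  assumes rat: "\<forall>j. r $ j \<in> \<rat>" and r: "r \<noteq> 0"
  obtains c where "0 < c" "\<forall>j. (c *\<^sub>R r) $ j \<in> \<int>" "Gcd ((\<lambda>j. \<lfloor>(c *\<^sub>R r) $ j\<rfloor>) ` UNIV) = 1"
proof -
  obtain D :: int where D: "D > 0" "\<forall>j. of_int D * r $ j \<in> \<int>"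
    using rational_vector_common_denominator[OF rat] by blast
  define z where "z j = \<lfloor>of_int D * r $ j\<rfloor>" for j
  have z: "of_int (z j) = of_int D * r $ j" for j
    using D(2) unfolding z_def by (metis Ints_cases floor_of_int)
  define G where "G = Gcd (range z)"
  obtain j0 where "r $ j0 \<noteq> 0" using r by (auto simp: vec_eq_iff)
  then have "z j0 \<noteq> 0" using z[of j0] D(1) by auto
  then have "G \<noteq> 0" unfolding G_def by (auto simp: Gcd_0_iff)
  then have G: "G > 0" using Gcd_int_greater_eq_0[of "range z"] unfolding G_def by linarith
  define w where "w j = z j div G" for j
  have zw: "z j = G * w j" for j
    unfolding w_def G_def by (simp add: Gcd_dvd)
  have "range z = (*) G ` range w" by (auto simp: zw image_image)
  then have "Gcd (range z) = normalize (G * Gcd (range w))" by (simp only: Gcd_mult)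
  then have "G = \<bar>G * Gcd (range w)\<bar>" by (simp flip: G_def)
  then have Gw: "Gcd (range w) = 1" using G by (simp add: abs_mult)
  define c :: real where "c = of_int D / of_int G"
  have cr: "c * r $ j = of_int (w j)" for j
    using z[of j] G by (simp add: c_def zw field_simps)
  show thesis
  proof
    show "0 < c" using D(1) G by (simp add: c_def)
    show "\<forall>j. (c *\<^sub>R r) $ j \<in> \<int>" by (simp add: cr)
    show "Gcd ((\<lambda>j. \<lfloor>(c *\<^sub>R r) $ j\<rfloor>) ` UNIV) = 1" by (simp add: cr Gw)
  qed
qed

section \<open>Sign vectors\<close>

definition pos_part :: "real^'m \<Rightarrow> real^'m" where
  "pos_part v = (\<chi> i. max (v $ i) 0)"

definition neg_part :: "real^'m \<Rightarrow> real^'m" where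
  "neg_part v = (\<chi> i. max (- v $ i) 0)"

definition conformal :: "real^'m \<Rightarrow> real^'m \<Rightarrow> bool" where
  "conformal u v \<longleftrightarrow> (\<forall>i. 0 \<le> u $ i * v $ i)"

definition conforms_to :: "real^'m \<Rightarrow> real^'m \<Rightarrow> bool" where
  "conforms_to u v \<longleftrightarrow> (\<forall>i. u $ i \<noteq> 0 \<longrightarrow> 0 < u $ i * v $ i)"

lemma pos_part_nth [simp]: "pos_part v $ i = max (v $ i) 0"
  by (simp add: pos_part_def)

lemma neg_part_nth [simp]: "neg_part v $ i = max (- v $ i) 0"
  by (simp add: neg_part_def)

lemma pos_part_minus_neg_part: "pos_part v - neg_part v = v"
  by (auto simp: vec_eq_iff max_def)

lemma pos_part_add:
  assumes "conformal u v"
  shows "pos_part (u + v) = pos_part u + pos_part v"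
proof -
  have "max (u $ i + v $ i) 0 = max (u $ i) 0 + max (v $ i) 0" for i
    using assms[unfolded conformal_def, rule_format, of i] by (auto simp: max_def zero_le_mult_iff)
  then show ?thesis by (simp add: vec_eq_iff)
qed

lemma neg_part_add:
  assumes "conformal u v"
  shows "neg_part (u + v) = neg_part u + neg_part v"
proof -
  have "max (- u $ i - v $ i) 0 = max (- u $ i) 0 + max (- v $ i) 0" for i
    using assms[unfolded conformal_def, rule_format, of i] by (auto simp: max_def zero_le_mult_iff)
  then show ?thesis by (simp add: vec_eq_iff)
qed

lemma pos_part_scaleR: "0 \<le> c \<Longrightarrow> pos_part (c *\<^sub>R v) = c *\<^sub>R pos_part v"
  by (auto simp: vec_eq_iff max_def mult_le_0_iff zero_le_mult_iff)

lemma neg_part_scaleR: "0 \<le> c \<Longrightarrow> neg_part (c *\<^sub>R v) = c *\<^sub>R neg_part v"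
  by (auto simp: vec_eq_iff max_def mult_le_0_iff zero_le_mult_iff)

lemma pos_part_uminus: "pos_part (- v) = neg_part v"
  by (simp add: vec_eq_iff)

lemma neg_part_uminus: "neg_part (- v) = pos_part v"
  by (simp add: vec_eq_iff)

lemma max_parts_unique:
  fixes p m d l :: real
  assumes "0 \<le> p" "0 \<le> m" "p \<le> max d 0" "m \<le> max (- d) 0" "p - m = l * d"
  shows "p = l * max d 0 \<and> m = l * max (- d) 0"
  using assms by (cases d "0::real" rule: linorder_cases) (auto simp: max_def)

lemma vsupp_eq_empty_iff: "vsupp v = {} \<longleftrightarrow> v = 0"
  by (auto simp: vsupp_def vec_eq_iff)

lemma vsupp_scaleR: "c \<noteq> 0 \<Longrightarrow> vsupp (c *\<^sub>R v) = vsupp v"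
  by (simp add: vsupp_def)

lemma vsupp_uminus: "vsupp (- v) = vsupp v"
  by (simp add: vsupp_def)

lemma conforms_to_refl: "conforms_to v v"
  unfolding conforms_to_def by (metis not_real_square_gt_zero)

lemma conforms_to_trans:
  assumes "conforms_to u v" "conforms_to v w"
  shows "conforms_to u w"
  unfolding conforms_to_def
proof (intro allI impI)
  fix i assume "u $ i \<noteq> 0"
  then have uv: "0 < u $ i * v $ i" using assms(1) by (simp add: conforms_to_def)
  then have "v $ i \<noteq> 0" by auto
  then have "0 < v $ i * w $ i" using assms(2) by (simp add: conforms_to_def)
  with uv show "0 < u $ i * w $ i" by (auto simp: zero_less_mult_iff)
qed

lemma conforms_to_scaleR: "0 < c \<Longrightarrow> conforms_to u v \<Longrightarrow> conforms_to (c *\<^sub>R u) v"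
  by (simp add: conforms_to_def mult.assoc)

lemma vsupp_subset_if_conforms_to: "conforms_to u v \<Longrightarrow> vsupp u \<subseteq> vsupp v"
  by (auto simp: conforms_to_def vsupp_def)

lemma conforms_toI:
  assumes "conformal u v" "vsupp u \<subseteq> vsupp v"
  shows "conforms_to u v"
  unfolding conforms_to_def
proof (intro allI impI)
  fix i assume "u $ i \<noteq> 0"
  moreover from this have "v $ i \<noteq> 0" using assms(2) by (auto simp: vsupp_def)
  ultimately show "0 < u $ i * v $ i"
    using assms(1) by (simp add: conformal_def order_less_le)
qed

lemma conformal_if_conforms_to_same:
  assumes "conforms_to u w" "conforms_to v w"
  shows "conformal u v"
  unfolding conformal_def
proof
  fix i
  show "0 \<le> u $ i * v $ i"
  proof (cases "u $ i = 0 \<or> v $ i = 0")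
    case False
    then have "0 < u $ i * w $ i" "0 < v $ i * w $ i" using assms by (auto simp: conforms_to_def)
    then show ?thesis by (auto simp: zero_less_mult_iff zero_le_mult_iff)
  qed auto
qed

text \<open>Subtracting from \<open>u\<close> the largest multiple of \<open>v\<close> that keeps the signs of \<open>u\<close>
  kills at least one entry of \<open>u\<close>.\<close>
lemma conformal_reduction:
  fixes u v :: "real^'m"
  assumes sub: "vsupp v \<subseteq> vsupp u" and k: "0 < u $ k * v $ k"
  obtains t where "0 < t" "conforms_to (u - t *\<^sub>R v) u" "vsupp (u - t *\<^sub>R v) \<subset> vsupp u"
proof -
  define I where "I = {i. 0 < u $ i * v $ i}"
  define t where "t = Min ((\<lambda>i. u $ i / v $ i) ` I)"
  have I: "finite I" "I \<noteq> {}" using k by (auto simp: I_def)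
  have "t \<in> (\<lambda>i. u $ i / v $ i) ` I" unfolding t_def using I by (intro Min_in) auto
  then obtain j where j: "j \<in> I" "t = u $ j / v $ j" by auto
  have t_le: "t \<le> u $ i / v $ i" if "i \<in> I" for i
    unfolding t_def using I that by (intro Min_le) auto
  have "0 < t" using j by (auto simp: I_def zero_less_mult_iff zero_less_divide_iff)
  have "0 \<le> (u - t *\<^sub>R v) $ i * u $ i" for i
  proof (cases "i \<in> I")
    case True
    then have uv: "0 < u $ i * v $ i" "v $ i \<noteq> 0" by (auto simp: I_def)
    have "0 \<le> (u $ i * v $ i) * (u $ i / v $ i - t)" using uv t_le[OF True] by simp
    also have "\<dots> = (u - t *\<^sub>R v) $ i * u $ i" using uv by (simp add: algebra_simps)
    finally show ?thesis .
  next
    case False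
    then have "t * (u $ i * v $ i) \<le> 0" using \<open>0 < t\<close> by (simp add: I_def mult_nonneg_nonpos)
    moreover have "0 \<le> u $ i * u $ i" by simp
    ultimately have "0 \<le> u $ i * u $ i - t * (u $ i * v $ i)" by linarith
    then show ?thesis by (simp add: algebra_simps)
  qed
  moreover have "vsupp (u - t *\<^sub>R v) \<subseteq> vsupp u" using sub by (auto simp: vsupp_def)
  moreover have "j \<in> vsupp u" "j \<notin> vsupp (u - t *\<^sub>R v)"
    using j by (auto simp: I_def vsupp_def)
  ultimately show thesis
    using \<open>0 < t\<close> by (intro that conforms_toI) (auto simp: conformal_def mult.commute)
qed

lemma conformal_perturbation:
  fixes u v :: "real^'m"
  assumes "vsupp v \<subseteq> vsupp u"
  obtains \<epsilon> where "0 < \<epsilon>" "conformal (u + \<epsilon> *\<^sub>R v) (u - \<epsilon> *\<^sub>R v)"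
proof -
  define \<epsilon> where "\<epsilon> = Min (insert 1 ((\<lambda>i. \<bar>u $ i\<bar> / (\<bar>v $ i\<bar> + 1)) ` vsupp u))"
  have "0 < \<epsilon>"
    unfolding \<epsilon>_def by (subst Min_gr_iff) (auto simp: vsupp_def add_nonneg_pos)
  have bound: "\<bar>\<epsilon> * v $ i\<bar> \<le> \<bar>u $ i\<bar>" for i
  proof (cases "i \<in> vsupp u")
    case True
    then have "\<epsilon> \<le> \<bar>u $ i\<bar> / (\<bar>v $ i\<bar> + 1)" unfolding \<epsilon>_def by (intro Min_le) auto
    then have "\<epsilon> * (\<bar>v $ i\<bar> + 1) \<le> \<bar>u $ i\<bar>" by (simp add: pos_le_divide_eq add_nonneg_pos)
    then show ?thesis using \<open>0 < \<epsilon>\<close> by (simp add: abs_mult algebra_simps)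
  next
    case False
    then show ?thesis using assms by (auto simp: vsupp_def)
  qed
  have "0 \<le> (u + \<epsilon> *\<^sub>R v) $ i * (u - \<epsilon> *\<^sub>R v) $ i" for i
  proof -
    have "(\<epsilon> * v $ i)\<^sup>2 \<le> (u $ i)\<^sup>2" using bound abs_le_square_iff by blast
    then show ?thesis by (simp add: algebra_simps power2_eq_square)
  qed
  then have "conformal (u + \<epsilon> *\<^sub>R v) (u - \<epsilon> *\<^sub>R v)" unfolding conformal_def by blast
  with \<open>0 < \<epsilon>\<close> show thesis by (rule that)
qed

section \<open>Rays and faces of convex cones\<close>

lemma mem_ray_self: "r \<in> ray r"
  unfolding ray_def by (auto intro: exI[of _ 1])

lemma scaleR_mem_ray:
  assumes "z \<in> ray r" "0 \<le> c"
  shows "c *\<^sub>R z \<in> ray r"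
proof -
  obtain t where "0 \<le> t" "z = t *\<^sub>R r" using assms(1) by (auto simp: ray_def)
  then show ?thesis using assms(2) unfolding ray_def by (intro CollectI exI[of _ "c * t"]) auto
qed

lemma ray_scaleR:
  assumes "0 < c"
  shows "ray (c *\<^sub>R r) = ray r"
  unfolding ray_def
proof (intro set_eqI iffI)
  fix z assume "z \<in> {t *\<^sub>R c *\<^sub>R r |t. 0 \<le> t}"
  then obtain t where "0 \<le> t" "z = (t * c) *\<^sub>R r" by auto
  then show "z \<in> {t *\<^sub>R r |t. 0 \<le> t}" using assms by (intro CollectI exI[of _ "t * c"]) auto
next
  fix z assume "z \<in> {t *\<^sub>R r |t. 0 \<le> t}"
  then obtain t where "0 \<le> t" "z = (t / c) *\<^sub>R c *\<^sub>R r" using assms by auto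
  then show "z \<in> {t *\<^sub>R c *\<^sub>R r |t. 0 \<le> t}" using assms by fastforce
qed

lemma convex_ray: "convex (ray r)"
  unfolding ray_def convex_def
proof clarify
  fix u v s t :: real
  assume "0 \<le> u" "0 \<le> v" "0 \<le> s" "0 \<le> t"
  then have "u *\<^sub>R s *\<^sub>R r + v *\<^sub>R t *\<^sub>R r = (u * s + v * t) *\<^sub>R r" "0 \<le> u * s + v * t"
    by (auto simp: algebra_simps)
  then show "\<exists>t'. u *\<^sub>R s *\<^sub>R r + v *\<^sub>R t *\<^sub>R r = t' *\<^sub>R r \<and> 0 \<le> t'" by blast
qed

lemma face_of_ray_decomposition:
  assumes face: "ray r face_of C" and ab: "a \<in> C" "b \<in> C" "a + b = r"
  shows "a \<in> ray r"
proof (cases "a = b")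
  case True
  then have "a = (1/2) *\<^sub>R r" using ab(3) by (auto simp flip: scaleR_2)
  then show ?thesis unfolding ray_def by (auto intro: exI[of _ "1/2"])
next
  case False
  have "midpoint a b = (1/2) *\<^sub>R r" by (simp add: midpoint_def ab(3))
  then have "midpoint a b \<in> ray r" unfolding ray_def by (auto intro: exI[of _ "1/2"])
  moreover have "midpoint a b \<in> open_segment a b" using False by simp
  ultimately show ?thesis using face ab unfolding face_of_def by blast
qed

text \<open>A segment through a point \<open>t r\<close> of the ray writes \<open>t r\<close> as a sum of two points of
  the cone; pointedness settles the case \<open>t = 0\<close>.\<close>
lemma ray_face_ofI:
  fixes C :: "'a::real_vector set"
  assumes cone: "convex_cone C" and pointed: "pointed_cone C" and "r \<in> C"
    and indecomposable: "\<And>a b. a \<in> C \<Longrightarrow> b \<in> C \<Longrightarrow> a + b = r \<Longrightarrow> a \<in> ray r"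
  shows "ray r face_of C"
  unfolding face_of_def
proof (intro conjI ballI impI)
  show "ray r \<subseteq> C" using cone \<open>r \<in> C\<close> by (auto simp: ray_def convex_cone_iff)
  show "convex (ray r)" by (rule convex_ray)
next
  have left: "a \<in> ray r"
    if abC: "a \<in> C" "b \<in> C" and x: "x \<in> ray r" "x \<in> open_segment a b" for a b x
  proof -
    obtain u where u: "0 < u" "u < 1" "x = (1 - u) *\<^sub>R a + u *\<^sub>R b"
      using x(2) by (auto simp: in_segment)
    obtain t where t: "0 \<le> t" "x = t *\<^sub>R r" using x(1) by (auto simp: ray_def)
    have ab: "(1 - u) *\<^sub>R a \<in> C" "u *\<^sub>R b \<in> C" using cone abC u by (auto simp: convex_cone_iff)
    show ?thesis
    proof (cases "t = 0")
      case True
      then have "(1 - u) *\<^sub>R a = - (u *\<^sub>R b)" using u t by (simp add: eq_neg_iff_add_eq_0)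
      then have "(1 - u) *\<^sub>R a = 0" using pointed ab unfolding pointed_cone_def by (metis minus_minus)
      then have "a = 0" using u by simp
      then show ?thesis unfolding ray_def by (auto intro: exI[of _ 0])
    next
      case False
      then have "0 < t" using t by simp
      have "r = (1 / t) *\<^sub>R ((1 - u) *\<^sub>R a + u *\<^sub>R b)" using t u \<open>0 < t\<close> by simp
      then have "((1 - u) / t) *\<^sub>R a + (u / t) *\<^sub>R b = r"
        by (simp add: scaleR_add_right scaleR_scaleR)
      moreover have "((1 - u) / t) *\<^sub>R a \<in> C" "(u / t) *\<^sub>R b \<in> C"
        using cone abC u \<open>0 < t\<close> by (auto simp: convex_cone_iff)
      ultimately have "((1 - u) / t) *\<^sub>R a \<in> ray r" using indecomposable by blast
      from scaleR_mem_ray[OF this, of "t / (1 - u)"] show ?thesis using u \<open>0 < t\<close> by simp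
    qed
  qed
  fix a b x assume "a \<in> C" "b \<in> C" "x \<in> ray r" "x \<in> open_segment a b"
  then show "a \<in> ray r" "b \<in> ray r"
    using left[of a b x] left[of b a x] by (auto simp: open_segment_commute)
qed

lemma sum_mem_convex_cone:
  assumes "convex_cone S" "finite I" "\<And>i. i \<in> I \<Longrightarrow> f i \<in> S"
  shows "sum f I \<in> S"
  using assms(2,3)
proof (induction I rule: finite_induct)
  case empty
  then show ?case using assms(1) by (simp add: convex_cone_contains_0)
next
  case (insert a F)
  then show ?case using assms(1) by (simp add: convex_cone_add)
qed

section \<open>The cone \<open>cone_AB A B\<close>\<close>

lemma matrix_vector_mult_uminus_right: "M *v (- x) = - (M *v x)" for M :: "real^'n^'m"
  using matrix_vector_mult_scaleR[of M "-1" x] by simp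

definition lift :: "real^'n^'m \<Rightarrow> real^'n \<Rightarrow> (real^'n) \<times> (real^'m) \<times> (real^'m)" where
  "lift B x = (x, pos_part (B *v x), neg_part (B *v x))"

definition unit_pair :: "'m \<Rightarrow> (real^'n) \<times> (real^'m) \<times> (real^'m)" where
  "unit_pair i = (0, axis i 1, axis i 1)"

definition support_minimal :: "real^'n^'ma \<Rightarrow> real^'n^'mb \<Rightarrow> real^'n \<Rightarrow> bool" where
  "support_minimal A B x \<longleftrightarrow> A *v x = 0 \<and> x \<noteq> 0 \<and>
     \<not> (\<exists>y. A *v y = 0 \<and> y \<noteq> 0 \<and> vsupp (B *v y) \<subset> vsupp (B *v x))"

definition kernel_supported_on_row :: "real^'n^'ma \<Rightarrow> real^'n^'mb \<Rightarrow> 'mb \<Rightarrow> bool" where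
  "kernel_supported_on_row A B i \<longleftrightarrow> (\<exists>x. A *v x = 0 \<and> x \<noteq> 0 \<and> vsupp (B *v x) \<subseteq> {i})"

definition T_prime :: "real^'n^'ma \<Rightarrow> real^'n^'mb \<Rightarrow> ((real^'n) \<times> (real^'mb) \<times> (real^'mb)) set" where
  "T_prime A B = unit_pair ` {i. \<not> kernel_supported_on_row A B i}"

lemma circuits_iff:
  "g \<in> circuits A B \<longleftrightarrow>
     support_minimal A B g \<and> (\<forall>i. g $ i \<in> \<int>) \<and> Gcd ((\<lambda>i. \<lfloor>g $ i\<rfloor>) ` UNIV) = 1"
  by (auto simp: circuits_def support_minimal_def)

lemma support_minimal_scaleR:
  "support_minimal A B x \<Longrightarrow> c \<noteq> 0 \<Longrightarrow> support_minimal A B (c *\<^sub>R x)"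
  by (simp add: support_minimal_def matrix_vector_mult_scaleR vsupp_scaleR)

lemma T_prime_subset_T_set: "T_prime A B \<subseteq> T_set"
  by (auto simp: T_prime_def T_set_def unit_pair_def)

lemma card_T_prime_le:
  fixes A :: "real^'n^'ma" and B :: "real^'n^'mb"
  shows "card (T_prime A B) \<le> CARD('mb)"
proof -
  have "card (T_prime A B) \<le> card {i. \<not> kernel_supported_on_row A B i}"
    unfolding T_prime_def by (rule card_image_le) simp
  also have "\<dots> \<le> CARD('mb)" by (rule card_mono) auto
  finally show ?thesis .
qed

lemma mem_cone_AB:
  "(x, p, m) \<in> cone_AB A B \<longleftrightarrow>
     A *v x = 0 \<and> B *v x = p - m \<and> (\<forall>i. 0 \<le> p $ i) \<and> (\<forall>i. 0 \<le> m $ i)"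
  by (simp add: cone_AB_def)

lemma convex_cone_cone_AB:
  fixes A :: "real^'n^'ma" and B :: "real^'n^'mb"
  shows "convex_cone (cone_AB A B)"
  unfolding convex_cone_iff
proof (intro conjI ballI allI impI)
  show "0 \<in> cone_AB A B" by (simp add: zero_prod_def mem_cone_AB)
next
  fix z w assume "z \<in> cone_AB A B" "w \<in> cone_AB A B"
  then show "z + w \<in> cone_AB A B"
    by (cases z; cases w) (auto simp: mem_cone_AB matrix_vector_right_distrib)
next
  fix z :: "(real^'n) \<times> (real^'mb) \<times> (real^'mb)" and c :: real
  assume "z \<in> cone_AB A B" "0 \<le> c"
  then show "c *\<^sub>R z \<in> cone_AB A B"
    by (cases z) (auto simp: mem_cone_AB matrix_vector_mult_scaleR scaleR_diff_right)
qed

lemma lift_mem_cone_AB: "A *v x = 0 \<Longrightarrow> lift B x \<in> cone_AB A B"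
  by (simp add: lift_def mem_cone_AB pos_part_minus_neg_part)

lemma unit_pair_mem_cone_AB: "unit_pair i \<in> cone_AB A B"
  by (simp add: unit_pair_def mem_cone_AB axis_def)

lemma lift_add: "conformal (B *v x) (B *v y) \<Longrightarrow> lift B (x + y) = lift B x + lift B y"
  by (simp add: lift_def matrix_vector_right_distrib pos_part_add neg_part_add)

lemma lift_scaleR: "0 \<le> c \<Longrightarrow> lift B (c *\<^sub>R x) = c *\<^sub>R lift B x"
  by (simp add: lift_def matrix_vector_mult_scaleR pos_part_scaleR neg_part_scaleR)

lemma lift_0 [simp]: "lift B 0 = 0"
  by (simp add: lift_def vec_eq_iff zero_prod_def)

lemma fst_lift [simp]: "fst (lift B x) = x"
  by (simp add: lift_def)

lemma S_set_eq_lift_image: "S_set A B = lift B ` circuits A B"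
  by (auto simp: S_set_def lift_def pos_part_def neg_part_def)

lemma lift_add_lift_uminus:
  assumes "vsupp (B *v x) \<subseteq> {i}"
  shows "lift B x + lift B (- x) = \<bar>(B *v x) $ i\<bar> *\<^sub>R unit_pair i"
proof -
  have "(B *v x) $ j = 0" if "j \<noteq> i" for j using assms that by (auto simp: vsupp_def)
  then have "max ((B *v x) $ j) 0 + max (- (B *v x) $ j) 0 = \<bar>(B *v x) $ i\<bar> * axis i 1 $ j" for j
    by (cases "j = i") (auto simp: axis_def max_def)
  then have sum: "pos_part (B *v x) + neg_part (B *v x) = \<bar>(B *v x) $ i\<bar> *\<^sub>R axis i 1"
    by (simp add: vec_eq_iff)
  have "lift B x + lift B (- x) =
      (0, pos_part (B *v x) + neg_part (B *v x), neg_part (B *v x) + pos_part (B *v x))"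
    by (simp add: lift_def matrix_vector_mult_uminus_right pos_part_uminus neg_part_uminus)
  also have "\<dots> = \<bar>(B *v x) $ i\<bar> *\<^sub>R unit_pair i"
    using sum by (simp add: unit_pair_def add.commute)
  finally show ?thesis .
qed

lemma sum_scaleR_unit_pair: "(\<Sum>i\<in>UNIV. q $ i *\<^sub>R unit_pair i) = (0, q, q)"
  using basis_expansion[of q]
  by (simp add: unit_pair_def fst_sum snd_sum prod_eq_iff scalar_mult_eq_scaleR)

lemma mem_cone_AB_decompose:
  assumes "(x, p, m) \<in> cone_AB A B"
  shows "(x, p, m) = lift B x + (\<Sum>i\<in>UNIV. min (p $ i) (m $ i) *\<^sub>R unit_pair i)"
proof -
  define q where "q = (\<chi> i. min (p $ i) (m $ i))"
  have "(x, p, m) = lift B x + (0, q, q)"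
    using assms by (auto simp: q_def lift_def mem_cone_AB vec_eq_iff max_def min_def)
  also have "(0, q, q) = (\<Sum>i\<in>UNIV. q $ i *\<^sub>R unit_pair i)"
    by (rule sum_scaleR_unit_pair[symmetric])
  also have "\<dots> = (\<Sum>i\<in>UNIV. min (p $ i) (m $ i) *\<^sub>R unit_pair i)"
    by (simp add: q_def)
  finally show ?thesis .
qed

lemma mem_cone_AB_eq_lift:
  assumes r: "(x, p, m) \<in> cone_AB A B" and disjoint: "\<forall>i. \<not> 0 < min (p $ i) (m $ i)"
  shows "(x, p, m) = lift B x"
proof -
  have "min (p $ i) (m $ i) = 0" for i
  proof -
    have "0 \<le> min (p $ i) (m $ i)" using r by (simp add: mem_cone_AB)
    moreover have "\<not> 0 < min (p $ i) (m $ i)" using disjoint by blast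
    ultimately show ?thesis by linarith
  qed
  then show ?thesis using mem_cone_AB_decompose[OF r] by simp
qed

lemma unit_pair_indecomposable:
  assumes i: "\<not> kernel_supported_on_row A B i"
    and a: "a \<in> cone_AB A B" and b: "b \<in> cone_AB A B" and ab: "a + b = unit_pair i"
  shows "a \<in> ray (unit_pair i)"
proof -
  obtain x p m where a_eq: "a = (x, p, m)" by (cases a) auto
  obtain x' p' m' where b_eq: "b = (x', p', m')" by (cases b) auto
  have x: "A *v x = 0" "B *v x = p - m" "\<forall>j. 0 \<le> p $ j" "\<forall>j. 0 \<le> m $ j"
    using a by (auto simp: a_eq mem_cone_AB)
  have x': "\<forall>j. 0 \<le> p' $ j" "\<forall>j. 0 \<le> m' $ j" using b by (auto simp: b_eq mem_cone_AB)
  have sums: "p + p' = axis i 1" "m + m' = axis i 1"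
    using ab by (auto simp: a_eq b_eq unit_pair_def)
  have off_i: "p $ j = 0 \<and> m $ j = 0" if "j \<noteq> i" for j
  proof -
    have "p $ j + p' $ j = 0" "m $ j + m' $ j = 0"
      using sums that by (auto simp: vec_eq_iff axis_def)
    then show ?thesis using x(3,4) x' by (simp add: add_nonneg_eq_0_iff)
  qed
  have "vsupp (B *v x) \<subseteq> {i}"
  proof
    fix j assume "j \<in> vsupp (B *v x)"
    then have "p $ j \<noteq> m $ j" using x(2) by (simp add: vsupp_def)
    then show "j \<in> {i}" using off_i by (cases "j = i") auto
  qed
  then have "x = 0" using i x(1) by (auto simp: kernel_supported_on_row_def)
  then have "a = (0, p, p)" using x(2) by (simp add: a_eq)
  also have "\<dots> = p $ i *\<^sub>R unit_pair i"
    using off_i by (simp add: unit_pair_def vec_eq_iff axis_def)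
  finally show ?thesis using x(3) by (auto simp: ray_def)
qed

text \<open>The part \<open>\<mu> (0, e\<^sub>i, e\<^sub>i)\<close> of the generator splits off inside the cone, so the
  generator is a multiple of it.\<close>
lemma face_ray_eq_unit_pair_ray:
  fixes A :: "real^'n^'ma" and B :: "real^'n^'mb"
  assumes face: "ray r face_of cone_AB A B" and r_eq: "r = (x, p, m)"
    and i: "0 < min (p $ i) (m $ i)"
  shows "ray r = ray (unit_pair i)"
proof -
  define \<mu> where "\<mu> = min (p $ i) (m $ i)"
  have h: "A *v x = 0" "B *v x = p - m" "\<forall>i. 0 \<le> p $ i" "\<forall>i. 0 \<le> m $ i"
    using face_of_imp_subset[OF face] mem_ray_self[of r] by (auto simp: r_eq mem_cone_AB)
  have "\<mu> *\<^sub>R unit_pair i \<in> cone_AB A B"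
    using i by (simp add: \<mu>_def convex_cone_scaleR[OF convex_cone_cone_AB] unit_pair_mem_cone_AB)
  moreover have "r - \<mu> *\<^sub>R unit_pair i \<in> cone_AB A B"
  proof -
    have "r - \<mu> *\<^sub>R unit_pair i = (x, p - \<mu> *\<^sub>R axis i 1, m - \<mu> *\<^sub>R axis i 1)"
      by (simp add: r_eq unit_pair_def)
    moreover have "\<forall>j. 0 \<le> (p - \<mu> *\<^sub>R axis i 1) $ j" "\<forall>j. 0 \<le> (m - \<mu> *\<^sub>R axis i 1) $ j"
      using h(3,4) by (auto simp: \<mu>_def axis_def)
    moreover have "B *v x = (p - \<mu> *\<^sub>R axis i 1) - (m - \<mu> *\<^sub>R axis i 1)"
      by (simp add: h(2))
    ultimately show ?thesis using h(1) by (simp add: mem_cone_AB)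
  qed
  ultimately have "\<mu> *\<^sub>R unit_pair i \<in> ray r"
    by (rule face_of_ray_decomposition[OF face]) simp
  then obtain \<tau> where \<tau>: "0 \<le> \<tau>" "\<mu> *\<^sub>R unit_pair i = \<tau> *\<^sub>R r" by (auto simp: ray_def)
  have "\<mu> *\<^sub>R unit_pair i \<noteq> (0 :: (real^'n) \<times> (real^'mb) \<times> (real^'mb))"
    using i by (auto simp: \<mu>_def unit_pair_def zero_prod_def)
  then have "0 < \<tau>" using \<tau> by (cases "\<tau> = 0") auto
  then have "r = (1 / \<tau>) *\<^sub>R (\<tau> *\<^sub>R r)" by simp
  also have "\<dots> = (\<mu> / \<tau>) *\<^sub>R unit_pair i" by (simp add: \<tau>(2)[symmetric])
  finally have "r = (\<mu> / \<tau>) *\<^sub>R unit_pair i" .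
  moreover have "0 < \<mu> / \<tau>" using i \<open>0 < \<tau>\<close> by (simp add: \<mu>_def)
  ultimately show ?thesis using ray_scaleR by simp
qed

section \<open>Generators and extreme rays for a pointed system\<close>

lemma stack_mat_mult_vector_eq_0:
  "stack_mat A B *v v = 0 \<longleftrightarrow> A *v v = 0 \<and> B *v v = 0"
proof -
  have "(stack_mat A B *v v) $ Inl i = (A *v v) $ i" "(stack_mat A B *v v) $ Inr j = (B *v v) $ j"
    for i j by (simp_all add: stack_mat_def matrix_vector_mult_def)
  then show ?thesis by (simp add: vec_eq_iff split_sum_all)
qed

lemma pointed_poly_kernel_trivial:
  assumes "pointed_poly A B" "A *v x = 0" "B *v x = 0"
  shows "x = 0"
proof -
  have "inj ((*v) (stack_mat A B))"
    using assms(1) full_rank_injective unfolding pointed_poly_def by blast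
  moreover have "stack_mat A B *v x = stack_mat A B *v 0"
    using assms(2,3) by (simp add: stack_mat_mult_vector_eq_0)
  ultimately show ?thesis by (rule injD)
qed

locale pointed_pair =
  fixes A :: "real^'n^'ma" and B :: "real^'n^'mb"
  assumes kernel_trivial: "A *v x = 0 \<Longrightarrow> B *v x = 0 \<Longrightarrow> x = 0"
begin

lemma B_kernel_nonzero: "A *v x = 0 \<Longrightarrow> x \<noteq> 0 \<Longrightarrow> B *v x \<noteq> 0"
  using kernel_trivial by blast

lemma pointed_cone_AB: "pointed_cone (cone_AB A B)"
  unfolding pointed_cone_def
proof (intro allI impI)
  fix z :: "(real^'n) \<times> (real^'mb) \<times> (real^'mb)"
  assume z: "z \<in> cone_AB A B \<and> - z \<in> cone_AB A B"
  obtain x p m where z_eq: "z = (x, p, m)" by (cases z) auto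
  have "p $ i = 0 \<and> m $ i = 0" for i
  proof -
    have "0 \<le> p $ i" "0 \<le> - p $ i" "0 \<le> m $ i" "0 \<le> - m $ i"
      using z by (auto simp: z_eq mem_cone_AB)
    then show ?thesis by linarith
  qed
  then have "p = 0" "m = 0" by (simp_all add: vec_eq_iff)
  moreover have "x = 0" using z kernel_trivial \<open>p = 0\<close> \<open>m = 0\<close> by (auto simp: z_eq mem_cone_AB)
  ultimately show "z = 0" by (simp add: z_eq zero_prod_def)
qed

lemma support_minimal_multiple:
  assumes g: "support_minimal A B g" and y: "A *v y = 0"
    and sub: "vsupp (B *v y) \<subseteq> vsupp (B *v g)"
  obtains l where "y = l *\<^sub>R g"
proof (cases "y = 0")
  case True
  then show thesis using that[of 0] by simp
next
  case False
  have g_ker: "A *v g = 0"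
    and g_min: "\<And>z. A *v z = 0 \<Longrightarrow> z \<noteq> 0 \<Longrightarrow> \<not> vsupp (B *v z) \<subset> vsupp (B *v g)"
    using g by (auto simp: support_minimal_def)
  have "vsupp (B *v y) = vsupp (B *v g)" using g_min[OF y False] sub by blast
  then have eq: "(B *v y) $ j \<noteq> 0 \<longleftrightarrow> (B *v g) $ j \<noteq> 0" for j
    by (auto simp: vsupp_def set_eq_iff)
  obtain k where k: "(B *v y) $ k \<noteq> 0" using B_kernel_nonzero[OF y False] by (auto simp: vec_eq_iff)
  then have gk: "(B *v g) $ k \<noteq> 0" using eq by blast
  \<comment> \<open>Cancelling entry \<open>k\<close> gives a kernel vector of strictly smaller support.\<close>
  define l where "l = (B *v y) $ k / (B *v g) $ k"
  define z where "z = y - l *\<^sub>R g"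
  have Bz: "B *v z = B *v y - l *\<^sub>R (B *v g)"
    by (simp add: z_def matrix_vector_mult_diff_distrib matrix_vector_mult_scaleR)
  have "A *v z = 0"
    using g_ker y by (simp add: z_def matrix_vector_mult_diff_distrib matrix_vector_mult_scaleR)
  moreover have "vsupp (B *v z) \<subset> vsupp (B *v g)"
  proof
    show "vsupp (B *v z) \<subseteq> vsupp (B *v g)" using eq by (auto simp: Bz vsupp_def)
    have "(B *v z) $ k = 0" using gk by (simp add: Bz l_def)
    then show "vsupp (B *v z) \<noteq> vsupp (B *v g)" using gk by (auto simp: vsupp_def)
  qed
  ultimately have "z = 0" using g_min by blast
  then show thesis using that[of l] by (simp add: z_def)
qed

lemma conforming_support_reduction:
  assumes g: "A *v g = 0" "conforms_to (B *v g) (B *v x)"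
    and y: "A *v y = 0" "y \<noteq> 0" "vsupp (B *v y) \<subset> vsupp (B *v g)"
  obtains g' where "A *v g' = 0" "g' \<noteq> 0" "conforms_to (B *v g') (B *v x)"
    "vsupp (B *v g') \<subset> vsupp (B *v g)"
proof -
  obtain k where yk: "(B *v y) $ k \<noteq> 0" using B_kernel_nonzero[OF y(1,2)] by (auto simp: vec_eq_iff)
  then have gk: "(B *v g) $ k \<noteq> 0" using y(3) by (auto simp: vsupp_def)
  obtain w where w: "A *v w = 0" "vsupp (B *v w) = vsupp (B *v y)" "0 < (B *v g) $ k * (B *v w) $ k"
  proof (cases "0 < (B *v g) $ k * (B *v y) $ k")
    case True
    then show thesis using y(1) by (intro that) simp_all
  next
    case False
    then have "(B *v g) $ k * (B *v y) $ k < 0" using yk gk by (simp add: linorder_not_less order_le_less)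
    then show thesis using y(1)
      by (intro that[of "- y"]) (simp_all add: matrix_vector_mult_uminus_right vsupp_uminus)
  qed
  obtain t where t: "0 < t" "conforms_to (B *v g - t *\<^sub>R (B *v w)) (B *v g)"
    "vsupp (B *v g - t *\<^sub>R (B *v w)) \<subset> vsupp (B *v g)"
    using conformal_reduction[of "B *v w" "B *v g" k] w(2,3) y(3) by auto
  define g' where "g' = g - t *\<^sub>R w"
  have Bg': "B *v g' = B *v g - t *\<^sub>R (B *v w)"
    by (simp add: g'_def matrix_vector_mult_diff_distrib matrix_vector_mult_scaleR)
  show thesis
  proof
    show "A *v g' = 0"
      using g(1) w(1) by (simp add: g'_def matrix_vector_mult_diff_distrib matrix_vector_mult_scaleR)
    show "g' \<noteq> 0"
    proof
      assume "g' = 0"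
      then have "B *v g = t *\<^sub>R (B *v w)" using Bg' by simp
      then have "vsupp (B *v g) = vsupp (B *v y)" using \<open>0 < t\<close> w(2) by (simp add: vsupp_scaleR)
      then show False using y(3) by simp
    qed
    show "conforms_to (B *v g') (B *v x)" using t(2) g(2) conforms_to_trans by (simp add: Bg')
    show "vsupp (B *v g') \<subset> vsupp (B *v g)" using t(3) by (simp add: Bg')
  qed
qed

lemma exists_support_minimal_conforming:
  assumes "A *v x = 0" "x \<noteq> 0"
  obtains g where "support_minimal A B g" "conforms_to (B *v g) (B *v x)"
proof -
  define P where "P y \<longleftrightarrow> A *v y = 0 \<and> y \<noteq> 0 \<and> conforms_to (B *v y) (B *v x)" for y
  have "P x" using assms conforms_to_refl by (simp add: P_def)
  then obtain g where g: "A *v g = 0" "g \<noteq> 0" "conforms_to (B *v g) (B *v x)"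
    and least: "\<And>y. P y \<Longrightarrow> card (vsupp (B *v g)) \<le> card (vsupp (B *v y))"
    using ex_has_least_nat[of P x "\<lambda>y. card (vsupp (B *v y))"] unfolding P_def by blast
  have "\<not> (\<exists>y. A *v y = 0 \<and> y \<noteq> 0 \<and> vsupp (B *v y) \<subset> vsupp (B *v g))"
  proof
    assume "\<exists>y. A *v y = 0 \<and> y \<noteq> 0 \<and> vsupp (B *v y) \<subset> vsupp (B *v g)"
    then obtain y where y: "A *v y = 0" "y \<noteq> 0" "vsupp (B *v y) \<subset> vsupp (B *v g)" by blast
    obtain g' where "A *v g' = 0" "g' \<noteq> 0" "conforms_to (B *v g') (B *v x)"
      and smaller: "vsupp (B *v g') \<subset> vsupp (B *v g)"
      by (rule conforming_support_reduction[OF g(1,3) y])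
    then have "P g'" by (simp add: P_def)
    moreover have "card (vsupp (B *v g')) < card (vsupp (B *v g))"
      using smaller by (simp add: psubset_card_mono)
    ultimately show False using least[of g'] by linarith
  qed
  with g show thesis by (intro that) (simp_all add: support_minimal_def)
qed

text \<open>Conformal decomposition: subtract a conforming support-minimal vector as far as the
  signs allow and recurse on the smaller support.\<close>
lemma lift_mem_hull_support_minimal:
  assumes "A *v x = 0"
  shows "lift B x \<in> convex_cone hull (lift B ` Collect (support_minimal A B))"
  using assms
proof (induction "card (vsupp (B *v x))" arbitrary: x rule: less_induct)
  case less
  let ?H = "convex_cone hull (lift B ` Collect (support_minimal A B))"
  show ?case
  proof (cases "x = 0")
    case True
    then show ?thesis by (simp add: convex_cone_hull_contains_0)
  next
    case False
    obtain g where g: "support_minimal A B g" "conforms_to (B *v g) (B *v x)"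
      using exists_support_minimal_conforming[OF less.prems False] by blast
    have Ag: "A *v g = 0" "g \<noteq> 0" using g(1) by (simp_all add: support_minimal_def)
    obtain k where "(B *v g) $ k \<noteq> 0" using B_kernel_nonzero[OF Ag] by (auto simp: vec_eq_iff)
    then have k: "0 < (B *v x) $ k * (B *v g) $ k" using g(2) by (simp add: conforms_to_def mult.commute)
    obtain t where t: "0 < t" "conforms_to (B *v x - t *\<^sub>R (B *v g)) (B *v x)"
      "vsupp (B *v x - t *\<^sub>R (B *v g)) \<subset> vsupp (B *v x)"
      using conformal_reduction[OF vsupp_subset_if_conforms_to[OF g(2)] k] by blast
    define x' where "x' = x - t *\<^sub>R g"
    have Bx': "B *v x' = B *v x - t *\<^sub>R (B *v g)"
      by (simp add: x'_def matrix_vector_mult_diff_distrib matrix_vector_mult_scaleR)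
    have "A *v x' = 0"
      using less.prems Ag by (simp add: x'_def matrix_vector_mult_diff_distrib matrix_vector_mult_scaleR)
    moreover have "card (vsupp (B *v x')) < card (vsupp (B *v x))"
      using t(3) by (simp add: Bx' psubset_card_mono)
    ultimately have "lift B x' \<in> ?H" using less.hyps by blast
    moreover have "lift B g \<in> ?H" using g(1) by (intro hull_inc) auto
    moreover have "conformal (B *v x') (B *v (t *\<^sub>R g))"
      using conformal_if_conforms_to_same[OF t(2) conforms_to_scaleR[OF t(1) g(2)]]
      by (simp add: Bx' matrix_vector_mult_scaleR)
    then have "lift B x = lift B x' + t *\<^sub>R lift B g"
      using lift_add[of B x' "t *\<^sub>R g"] lift_scaleR[of t B g] t(1) by (simp add: x'_def)
    ultimately show ?thesis
      using t(1) by (simp add: convex_cone_hull_add convex_cone_hull_mul)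
  qed
qed

lemma unit_pair_mem_hull:
  "unit_pair i \<in> convex_cone hull (lift B ` Collect (support_minimal A B) \<union> T_prime A B)"
  (is "_ \<in> ?H")
proof (cases "kernel_supported_on_row A B i")
  case False
  then show ?thesis by (intro hull_inc) (auto simp: T_prime_def)
next
  case True
  then obtain x where x: "A *v x = 0" "x \<noteq> 0" "vsupp (B *v x) \<subseteq> {i}"
    unfolding kernel_supported_on_row_def by blast
  have x_min: "support_minimal A B x"
    unfolding support_minimal_def
  proof (intro conjI x(1,2) notI)
    assume "\<exists>y. A *v y = 0 \<and> y \<noteq> 0 \<and> vsupp (B *v y) \<subset> vsupp (B *v x)"
    then obtain y where y: "A *v y = 0" "y \<noteq> 0" "vsupp (B *v y) \<subset> {i}"
      using x(3) by blast
    then have "vsupp (B *v y) = {}" by (metis psubset_eq subset_singletonD)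
    then show False using B_kernel_nonzero[OF y(1,2)] by (simp add: vsupp_eq_empty_iff)
  qed
  then have "support_minimal A B (- x)"
    using support_minimal_scaleR[OF x_min, of "-1"] by simp
  with x_min have "lift B x \<in> ?H" "lift B (- x) \<in> ?H" by (auto intro: hull_inc)
  then have "lift B x + lift B (- x) \<in> ?H" by (rule convex_cone_hull_add)
  then have "\<bar>(B *v x) $ i\<bar> *\<^sub>R unit_pair i \<in> ?H" by (simp only: lift_add_lift_uminus[OF x(3)])
  moreover have "(B *v x) $ i \<noteq> 0"
    using x(3) B_kernel_nonzero[OF x(1,2)] by (auto simp: vsupp_def vec_eq_iff)
  ultimately show ?thesis
    using convex_cone_hull_mul[of _ _ "1 / \<bar>(B *v x) $ i\<bar>"] by fastforce
qed

lemma cone_AB_eq_hull: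
  "cone_AB A B = convex_cone hull (lift B ` Collect (support_minimal A B) \<union> T_prime A B)"
  (is "_ = ?H")
proof
  have "lift B ` Collect (support_minimal A B) \<subseteq> cone_AB A B"
    using lift_mem_cone_AB by (auto simp: support_minimal_def)
  moreover have "T_prime A B \<subseteq> cone_AB A B"
    using unit_pair_mem_cone_AB by (auto simp: T_prime_def)
  ultimately show "?H \<subseteq> cone_AB A B"
    using convex_cone_cone_AB by (intro hull_minimal) auto
next
  show "cone_AB A B \<subseteq> ?H"
  proof
    fix z assume z: "z \<in> cone_AB A B"
    obtain x p m where z_eq: "z = (x, p, m)" by (cases z) auto
    have x: "A *v x = 0" "\<forall>i. 0 \<le> p $ i" "\<forall>i. 0 \<le> m $ i"
      using z by (auto simp: z_eq mem_cone_AB)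
    have "convex_cone hull (lift B ` Collect (support_minimal A B)) \<subseteq> ?H"
      by (rule hull_mono) (rule Un_upper1)
    then have "lift B x \<in> ?H" using lift_mem_hull_support_minimal[OF x(1)] by blast
    moreover have "(\<Sum>i\<in>UNIV. min (p $ i) (m $ i) *\<^sub>R unit_pair i) \<in> ?H"
    proof (rule sum_mem_convex_cone)
      show "convex_cone ?H" by (rule convex_cone_convex_cone_hull)
    next
      fix i
      have "0 \<le> min (p $ i) (m $ i)" using x(2,3) by simp
      then show "min (p $ i) (m $ i) *\<^sub>R unit_pair i \<in> ?H"
        by (rule convex_cone_hull_mul[OF unit_pair_mem_hull])
    qed simp
    ultimately have "lift B x + (\<Sum>i\<in>UNIV. min (p $ i) (m $ i) *\<^sub>R unit_pair i) \<in> ?H"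
      by (rule convex_cone_hull_add)
    then show "z \<in> ?H"
      unfolding z_eq mem_cone_AB_decompose[OF z[unfolded z_eq], symmetric] .
  qed
qed

lemma lift_indecomposable:
  assumes g: "support_minimal A B g" and a: "a \<in> cone_AB A B" and b: "b \<in> cone_AB A B"
    and ab: "a + b = lift B g"
  shows "a \<in> ray (lift B g)"
proof -
  obtain x p m where a_eq: "a = (x, p, m)" by (cases a) auto
  obtain x' p' m' where b_eq: "b = (x', p', m')" by (cases b) auto
  have x: "A *v x = 0" "B *v x = p - m" "\<forall>j. 0 \<le> p $ j" "\<forall>j. 0 \<le> m $ j"
    using a by (auto simp: a_eq mem_cone_AB)
  have x': "\<forall>j. 0 \<le> p' $ j" "\<forall>j. 0 \<le> m' $ j" using b by (auto simp: b_eq mem_cone_AB)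
  have sums: "p + p' = pos_part (B *v g)" "m + m' = neg_part (B *v g)"
    using ab by (auto simp: a_eq b_eq lift_def)
  have le: "p $ j \<le> max ((B *v g) $ j) 0" "m $ j \<le> max (- (B *v g) $ j) 0" for j
  proof -
    have "p $ j + p' $ j = max ((B *v g) $ j) 0" "m $ j + m' $ j = max (- (B *v g) $ j) 0"
      using sums by (simp_all add: vec_eq_iff)
    moreover have "0 \<le> p' $ j" "0 \<le> m' $ j" using x' by simp_all
    ultimately show "p $ j \<le> max ((B *v g) $ j) 0" "m $ j \<le> max (- (B *v g) $ j) 0"
      by linarith+
  qed
  have "vsupp (B *v x) \<subseteq> vsupp (B *v g)"
  proof
    fix j assume "j \<in> vsupp (B *v x)"
    then have "p $ j \<noteq> m $ j" using x(2) by (simp add: vsupp_def)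
    moreover have "0 \<le> p $ j" "0 \<le> m $ j" using x(3,4) by auto
    ultimately show "j \<in> vsupp (B *v g)" using le[of j] by (auto simp: vsupp_def)
  qed
  then obtain l where l: "x = l *\<^sub>R g" using support_minimal_multiple[OF g x(1)] by blast
  have parts: "p $ j = l * max ((B *v g) $ j) 0 \<and> m $ j = l * max (- (B *v g) $ j) 0" for j
  proof (rule max_parts_unique)
    show "p $ j - m $ j = l * (B *v g) $ j"
      using x(2) by (simp add: l matrix_vector_mult_scaleR vec_eq_iff)
  qed (use x le in auto)
  have "0 \<le> l"
  proof -
    have "B *v g \<noteq> 0" using g B_kernel_nonzero by (simp add: support_minimal_def)
    then obtain k where k: "(B *v g) $ k \<noteq> 0" by (auto simp: vec_eq_iff)
    have "p $ k + m $ k = l * \<bar>(B *v g) $ k\<bar>"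
      using parts[of k] by (auto simp: max_def)
    moreover have "0 \<le> p $ k + m $ k" using x(3,4) by (simp add: add_nonneg_nonneg)
    ultimately show ?thesis using k by (simp add: zero_le_mult_iff)
  qed
  have "a = l *\<^sub>R lift B g"
    using parts by (simp add: a_eq l lift_def vec_eq_iff)
  then show ?thesis using \<open>0 \<le> l\<close> by (auto simp: ray_def)
qed

lemma extreme_ray_lift:
  assumes "support_minimal A B g"
  shows "extreme_ray_of (ray (lift B g)) (cone_AB A B)"
  unfolding extreme_ray_of_def
proof (intro exI conjI)
  show "lift B g \<noteq> 0" using assms by (auto simp: support_minimal_def lift_def zero_prod_def)
  show "ray (lift B g) face_of cone_AB A B"
    using assms lift_indecomposable
    by (intro ray_face_ofI convex_cone_cone_AB pointed_cone_AB lift_mem_cone_AB)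
      (auto simp: support_minimal_def)
qed (rule refl)

lemma extreme_ray_unit_pair:
  assumes "\<not> kernel_supported_on_row A B i"
  shows "extreme_ray_of (ray (unit_pair i)) (cone_AB A B)"
  unfolding extreme_ray_of_def
proof (intro exI conjI)
  show "unit_pair i \<noteq> (0 :: (real^'n) \<times> (real^'mb) \<times> (real^'mb))"
    by (auto simp: unit_pair_def zero_prod_def)
  show "ray (unit_pair i) face_of cone_AB A B"
    using unit_pair_indecomposable[OF assms]
    by (intro ray_face_ofI convex_cone_cone_AB pointed_cone_AB unit_pair_mem_cone_AB)
qed (rule refl)

text \<open>If \<open>x\<close> were not support-minimal, perturbing it along a kernel vector of smaller
  \<open>B\<close>-support would split \<open>lift B x\<close> into two non-proportional summands.\<close>
lemma support_minimal_if_lift_indecomposable: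
  assumes x: "A *v x = 0" "x \<noteq> 0"
    and indecomposable: "\<And>a b. a \<in> cone_AB A B \<Longrightarrow> b \<in> cone_AB A B \<Longrightarrow> a + b = lift B x
      \<Longrightarrow> a \<in> ray (lift B x)"
  shows "support_minimal A B x"
  unfolding support_minimal_def
proof (intro conjI x notI)
  assume "\<exists>y. A *v y = 0 \<and> y \<noteq> 0 \<and> vsupp (B *v y) \<subset> vsupp (B *v x)"
  then obtain y where y: "A *v y = 0" "y \<noteq> 0" "vsupp (B *v y) \<subset> vsupp (B *v x)" by blast
  obtain \<epsilon> where \<epsilon>: "0 < \<epsilon>" "conformal (B *v x + \<epsilon> *\<^sub>R (B *v y)) (B *v x - \<epsilon> *\<^sub>R (B *v y))"
    using conformal_perturbation[of "B *v y" "B *v x"] y(3) by blast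
  define u where "u = x + \<epsilon> *\<^sub>R y"
  define w where "w = x - \<epsilon> *\<^sub>R y"
  have Au: "A *v u = 0" "A *v w = 0"
    using x(1) y(1) by (simp_all add: u_def w_def algebra_simps)
  have "conformal (B *v u) (B *v w)"
    using \<epsilon>(2) by (simp add: u_def w_def algebra_simps)
  then have "lift B u + lift B w = 2 *\<^sub>R lift B x"
    using lift_add[of B u w] lift_scaleR[of 2 B x] by (simp add: u_def w_def scaleR_2)
  then have "(1/2) *\<^sub>R lift B u + (1/2) *\<^sub>R lift B w = lift B x"
    by (simp flip: scaleR_add_right)
  moreover have "(1/2) *\<^sub>R lift B u \<in> cone_AB A B" "(1/2) *\<^sub>R lift B w \<in> cone_AB A B"
    using Au by (simp_all add: convex_cone_scaleR[OF convex_cone_cone_AB] lift_mem_cone_AB)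
  ultimately have "(1/2) *\<^sub>R lift B u \<in> ray (lift B x)" using indecomposable by blast
  then obtain \<tau> where "(1/2) *\<^sub>R lift B u = \<tau> *\<^sub>R lift B x" by (auto simp: ray_def)
  from arg_cong[where f = fst, OF this] have half: "(1/2) *\<^sub>R u = \<tau> *\<^sub>R x" by simp
  have "u = 2 *\<^sub>R ((1/2) *\<^sub>R u)" by simp
  also have "\<dots> = (2 * \<tau>) *\<^sub>R x" by (simp add: half)
  finally have "u = (2 * \<tau>) *\<^sub>R x" .
  then have "\<epsilon> *\<^sub>R y = (2 * \<tau> - 1) *\<^sub>R x" by (simp add: u_def algebra_simps)
  moreover from this have "2 * \<tau> - 1 \<noteq> 0" using \<epsilon>(1) y(2) by auto
  ultimately have "vsupp (B *v y) = vsupp (B *v x)"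
    using \<epsilon>(1) vsupp_scaleR[of \<epsilon> "B *v y"] vsupp_scaleR[of "2 * \<tau> - 1" "B *v x"]
    by (simp add: matrix_vector_mult_scaleR[symmetric])
  with y(3) show False by simp
qed

lemma not_kernel_supported_if_unit_pair_indecomposable:
  assumes indecomposable: "\<And>a b. a \<in> cone_AB A B \<Longrightarrow> b \<in> cone_AB A B \<Longrightarrow> a + b = unit_pair i
      \<Longrightarrow> a \<in> ray (unit_pair i)"
  shows "\<not> kernel_supported_on_row A B i"
proof
  assume "kernel_supported_on_row A B i"
  then obtain x where x: "A *v x = 0" "x \<noteq> 0" "vsupp (B *v x) \<subseteq> {i}"
    unfolding kernel_supported_on_row_def by blast
  define d where "d = \<bar>(B *v x) $ i\<bar>"
  have "d \<noteq> 0"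
    using x(3) B_kernel_nonzero[OF x(1,2)] by (auto simp: d_def vsupp_def vec_eq_iff)
  then have "(1/d) *\<^sub>R lift B x + (1/d) *\<^sub>R lift B (- x) = unit_pair i"
    using lift_add_lift_uminus[OF x(3)] by (simp add: d_def flip: scaleR_add_right)
  moreover have "(1/d) *\<^sub>R lift B x \<in> cone_AB A B" "(1/d) *\<^sub>R lift B (- x) \<in> cone_AB A B"
    using x(1) by (simp_all add: convex_cone_scaleR[OF convex_cone_cone_AB] lift_mem_cone_AB
        d_def matrix_vector_mult_uminus_right)
  ultimately have "(1/d) *\<^sub>R lift B x \<in> ray (unit_pair i)" using indecomposable by blast
  then obtain \<tau> where "(1/d) *\<^sub>R lift B x = \<tau> *\<^sub>R unit_pair i" by (auto simp: ray_def)
  from arg_cong[where f = fst, OF this] have "(1/d) *\<^sub>R x = 0" by (simp add: unit_pair_def)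
  with \<open>d \<noteq> 0\<close> x(2) show False by simp
qed

lemma extreme_ray_cone_AB_cases:
  assumes "extreme_ray_of R (cone_AB A B)"
  shows "R \<in> ray ` (lift B ` Collect (support_minimal A B) \<union> T_prime A B)"
proof -
  obtain r where r: "r \<noteq> 0" "R = ray r" "ray r face_of cone_AB A B"
    using assms by (auto simp: extreme_ray_of_def)
  have rC: "r \<in> cone_AB A B" using r(3) mem_ray_self face_of_imp_subset by blast
  obtain x p m where r_eq: "r = (x, p, m)" by (cases r) auto
  show ?thesis
  proof (cases "\<exists>i. 0 < min (p $ i) (m $ i)")
    case True
    then obtain i where "0 < min (p $ i) (m $ i)" by blast
    then have R: "R = ray (unit_pair i)"
      using face_ray_eq_unit_pair_ray[OF r(3) r_eq] r(2) by simp
    then have "ray (unit_pair i) face_of cone_AB A B" using r(2,3) by simp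
    then have "\<not> kernel_supported_on_row A B i"
      by (rule not_kernel_supported_if_unit_pair_indecomposable[OF face_of_ray_decomposition])
    then show ?thesis using R by (auto simp: T_prime_def)
  next
    case False
    then have r_lift: "r = lift B x" using mem_cone_AB_eq_lift rC r_eq by blast
    then have "x \<noteq> 0" using r(1) by auto
    have "A *v x = 0" using rC by (simp add: r_eq mem_cone_AB)
    then have "support_minimal A B x"
      using \<open>x \<noteq> 0\<close> face_of_ray_decomposition[OF r(3)]
      by (intro support_minimal_if_lift_indecomposable) (auto simp: r_lift)
    then show ?thesis using r(2) r_lift by blast
  qed
qed

lemma extreme_rays_cone_AB:
  "{R. extreme_ray_of R (cone_AB A B)} = ray ` (lift B ` Collect (support_minimal A B) \<union> T_prime A B)"
proof
  show "{R. extreme_ray_of R (cone_AB A B)} \<subseteq> ray ` (lift B ` Collect (support_minimal A B) \<union> T_prime A B)"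
    using extreme_ray_cone_AB_cases by blast
  show "ray ` (lift B ` Collect (support_minimal A B) \<union> T_prime A B) \<subseteq> {R. extreme_ray_of R (cone_AB A B)}"
    using extreme_ray_lift extreme_ray_unit_pair by (auto simp: T_prime_def)
qed

lemma support_minimal_rational_multiple:
  assumes ratA: "\<forall>i j. A $ i $ j \<in> \<rat>" and ratB: "\<forall>i j. B $ i $ j \<in> \<rat>"
    and x: "support_minimal A B x"
  obtains l where "l \<noteq> 0" "\<forall>j. (l *\<^sub>R x) $ j \<in> \<rat>"
proof -
  \<comment> \<open>A rational matrix whose kernel is exactly the line through \<open>x\<close>.\<close>
  define B' :: "real^'n^'mb" where "B' = (\<chi> j. if (B *v x) $ j = 0 then B $ j else 0)"
  define M where "M = stack_mat A B'"
  have B'_mult: "(B' *v v) $ j = (if (B *v x) $ j = 0 then (B *v v) $ j else 0)" for v j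
    by (simp add: B'_def matrix_vector_mult_def)
  have ker: "M *v v = 0 \<longleftrightarrow> A *v v = 0 \<and> vsupp (B *v v) \<subseteq> vsupp (B *v x)" for v
    unfolding M_def stack_mat_mult_vector_eq_0 by (auto simp: vec_eq_iff B'_mult vsupp_def)
  have "\<forall>k j. M $ k $ j \<in> \<rat>"
    using ratA ratB by (auto simp: M_def stack_mat_def B'_def split: sum.split)
  moreover have "A *v x = 0" "x \<noteq> 0" using x by (simp_all add: support_minimal_def)
  ultimately obtain r where r: "r \<noteq> 0" "\<forall>j. r $ j \<in> \<rat>" "M *v r = 0"
    using rational_kernel_vector[of M x] ker by blast
  moreover obtain l where "r = l *\<^sub>R x"
    using support_minimal_multiple[OF x] r(3) ker by blast
  ultimately show thesis using that[of l] by auto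
qed

lemma support_minimal_circuit_multiple:
  assumes ratA: "\<forall>i j. A $ i $ j \<in> \<rat>" and ratB: "\<forall>i j. B $ i $ j \<in> \<rat>"
    and x: "support_minimal A B x"
  obtains c where "0 < c" "c *\<^sub>R x \<in> circuits A B"
proof -
  obtain l where l: "l \<noteq> 0" "\<forall>j. (l *\<^sub>R x) $ j \<in> \<rat>"
    using support_minimal_rational_multiple[OF ratA ratB x] by blast
  have "\<forall>j. (\<bar>l\<bar> *\<^sub>R x) $ j \<in> \<rat>"
    using l(2) by (cases "0 \<le> l") (simp_all add: abs_if)
  moreover have "\<bar>l\<bar> *\<^sub>R x \<noteq> 0" using l(1) x by (simp add: support_minimal_def)
  ultimately obtain c where c: "0 < c" "\<forall>j. (c *\<^sub>R \<bar>l\<bar> *\<^sub>R x) $ j \<in> \<int>"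
    "Gcd ((\<lambda>j. \<lfloor>(c *\<^sub>R \<bar>l\<bar> *\<^sub>R x) $ j\<rfloor>) ` UNIV) = 1"
    by (rule rational_vector_primitive_multiple)
  have "support_minimal A B ((c * \<bar>l\<bar>) *\<^sub>R x)"
    using support_minimal_scaleR[OF x] c(1) l(1) by simp
  with c have "(c * \<bar>l\<bar>) *\<^sub>R x \<in> circuits A B" by (simp add: circuits_iff)
  moreover have "0 < c * \<bar>l\<bar>" using c(1) l(1) by simp
  ultimately show thesis using that by blast
qed

lemma ray_lift_image_support_minimal_eq:
  assumes ratA: "\<forall>i j. A $ i $ j \<in> \<rat>" and ratB: "\<forall>i j. B $ i $ j \<in> \<rat>"
  shows "ray ` lift B ` Collect (support_minimal A B) = ray ` lift B ` circuits A B"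
proof
  show "ray ` lift B ` circuits A B \<subseteq> ray ` lift B ` Collect (support_minimal A B)"
    by (auto simp: circuits_iff)
  show "ray ` lift B ` Collect (support_minimal A B) \<subseteq> ray ` lift B ` circuits A B"
  proof
    fix R assume "R \<in> ray ` lift B ` Collect (support_minimal A B)"
    then obtain x where x: "support_minimal A B x" "R = ray (lift B x)" by blast
    obtain c where c: "0 < c" "c *\<^sub>R x \<in> circuits A B"
      using support_minimal_circuit_multiple[OF ratA ratB x(1)] by blast
    then have "R = ray (lift B (c *\<^sub>R x))"
      by (simp add: x(2) lift_scaleR ray_scaleR)
    with c(2) show "R \<in> ray ` lift B ` circuits A B" by blast
  qed
qed

lemma hull_lift_support_minimal_eq:
  assumes ratA: "\<forall>i j. A $ i $ j \<in> \<rat>" and ratB: "\<forall>i j. B $ i $ j \<in> \<rat>"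
  shows "convex_cone hull (lift B ` Collect (support_minimal A B) \<union> X)
    = convex_cone hull (lift B ` circuits A B \<union> X)"
proof
  have "lift B x \<in> convex_cone hull (lift B ` circuits A B \<union> X)" if x: "support_minimal A B x" for x
  proof -
    obtain c where c: "0 < c" "c *\<^sub>R x \<in> circuits A B"
      using support_minimal_circuit_multiple[OF ratA ratB x] by blast
    then have "lift B (c *\<^sub>R x) \<in> convex_cone hull (lift B ` circuits A B \<union> X)"
      by (intro hull_inc) auto
    then have "(1 / c) *\<^sub>R lift B (c *\<^sub>R x) \<in> convex_cone hull (lift B ` circuits A B \<union> X)"
      using c(1) by (intro convex_cone_hull_mul) auto
    then show ?thesis using c(1) by (simp add: lift_scaleR)
  qed
  then have "lift B ` Collect (support_minimal A B) \<union> X \<subseteq> convex_cone hull (lift B ` circuits A B \<union> X)"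
    by (auto intro: hull_inc)
  then show "convex_cone hull (lift B ` Collect (support_minimal A B) \<union> X)
    \<subseteq> convex_cone hull (lift B ` circuits A B \<union> X)"
    by (intro hull_minimal convex_cone_convex_cone_hull)
  show "convex_cone hull (lift B ` circuits A B \<union> X)
    \<subseteq> convex_cone hull (lift B ` Collect (support_minimal A B) \<union> X)"
    by (rule hull_mono) (auto simp: circuits_iff)
qed

end

theorem theorem3:
  fixes A :: "real^'n^'ma" and B :: "real^'n^'mb"
  assumes ratA: "\<forall>i j. A $ i $ j \<in> \<rat>"
    and ratB: "\<forall>i j. B $ i $ j \<in> \<rat>"
    and pointed: "pointed_poly A B"
  shows "pointed_cone (cone_AB A B) \<and>
    (\<exists>T'. T' \<subseteq> (T_set :: ((real^'n) \<times> (real^'mb) \<times> (real^'mb)) set) \<and> card T' \<le> CARD('mb) \<and>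
       cone_AB A B = convex_cone hull (S_set A B \<union> T') \<and>
       {R. extreme_ray_of R (cone_AB A B)} = ray ` (S_set A B \<union> T'))"
proof -
  interpret pointed_pair A B
    by unfold_locales (rule pointed_poly_kernel_trivial[OF pointed])
  have hull: "cone_AB A B = convex_cone hull (S_set A B \<union> T_prime A B)"
    unfolding S_set_eq_lift_image hull_lift_support_minimal_eq[OF ratA ratB, symmetric]
    by (rule cone_AB_eq_hull)
  have rays: "{R. extreme_ray_of R (cone_AB A B)} = ray ` (S_set A B \<union> T_prime A B)"
    unfolding S_set_eq_lift_image image_Un ray_lift_image_support_minimal_eq[OF ratA ratB, symmetric]
    by (simp only: extreme_rays_cone_AB image_Un)
  show ?thesis
    using pointed_cone_AB T_prime_subset_T_set card_T_prime_le hull rays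
    by (intro conjI exI[of _ "T_prime A B"])
qed

end
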